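(* Assume the standing hypothesis (H) below. Then for every $K>0$ there exists a constant $C_K>0$ such that for all $w_1,w_2\in W$ with $\max\{|w_1|_W,|w_2|_W\}\le K$, $$d_H(Z(w_1),Z(w_2))\le C_K|w_1-w_2|_W,$$ where $d_H(A,B)=\max\{\sup_{z\in A}\mathrm{dist}(z,B),\sup_{z'\in B}\mathrm{dist}(z',A)\}$ is the Hausdorff distance.
   Context: $X$ is a real Hilbert space with inner product $\langle\cdot,\cdot\rangle$ and norm $|x|=\sqrt{\langle x,x\rangle}$; $W$ is a real Banach space with norm $|\cdot|_W$. $G:X\times W\to[0,\infty)$ is locally Lipschitz continuous and $Z(w):=\{x\in X: G(x,w)\le 1\}$; $\partial Z(w)$ is its boundary and $\mathrm{dist}(x,S)=\inf_{s\in S}|x-s|$. The partial gradient $\nabla_xG(x,w)\in X$ is defined by $\langle\nabla_xG(x,w),y\rangle=\lim_{t\to0}\frac1t(G(x+ty,w)-G(x,w))$ for all $y\in X$. Hypothesis (H): $\nabla_xG(x,w)$ exists for all $x\in X$, $w\in W$, and there are positive constants $\lambda,c,L$ and functions $\mu_1:W\times[0,\infty)\to[0,\infty)$, $\mu_2:[0,\infty)\to[0,\infty)$ with $\mu_1(w,0)=\mu_2(0)=0$, $\lim_{s\to\infty}\mu_1(w,s)=\lim_{s\to\infty}\mu_2(s)=\infty$ for every $w$, such that for all $x,y,z\in X$, $w,w'\in W$: (i) $G(x,w)=1\Rightarrow|\nabla_xG(x,w)|\ge c$; (ii) $|\nabla_xG(x,w)-\nabla_xG(y,w)|\le\mu_1(w,|x-y|)$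 if $x,y\in Z(w)$; (iii) $\langle\nabla_xG(x,w)-\nabla_xG(z,w),x-z\rangle\ge-\lambda|x-z|^2$ if $x\in\partial Z(w)$, $z\in Z(w)$; (iv) $|G(x,w)-G(x,w')|\le L|w-w'|_W$; (v) for every $\rho>0$, $\mathrm{dist}(x,Z(w))\ge\rho\Rightarrow G(x,w)-1\ge\mu_2(\rho)$. *)

theory Defs
  imports "HOL-Analysis.Analysis"
begin

definition loc_lipschitz :: "('a::metric_space \<Rightarrow> 'b::metric_space) \<Rightarrow> bool" where
  "loc_lipschitz f \<longleftrightarrow>
     (\<forall>p. \<exists>e>0. \<exists>M. \<forall>a\<in>ball p e. \<forall>b\<in>ball p e. dist (f a) (f b) \<le> M * dist a b)"

text \<open>Distance from a point to a set, extended-real valued (inf over the empty set is +infinity).\<close>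
definition edist_set :: "'a::metric_space \<Rightarrow> 'a set \<Rightarrow> ereal" where
  "edist_set x S = (INF s\<in>S. ereal (dist x s))"

definition hdist :: "'a::metric_space set \<Rightarrow> 'a set \<Rightarrow> ereal" where
  "hdist A B = max (SUP z\<in>A. edist_set z B) (SUP z\<in>B. edist_set z A)"

definition Zset :: "('a \<Rightarrow> 'w \<Rightarrow> real) \<Rightarrow> 'w \<Rightarrow> 'a set" where
  "Zset G w = {x. G x w \<le> 1}"

end

theory Submission
  imports Defs
begin

text \<open>
  Fix \<open>x \<in> Z(w\<^sub>1)\<close> and move the parameter along the segment
  \<open>w(s) = w\<^sub>2 + s (w\<^sub>1 - w\<^sub>2)\<close> from \<open>s = 1\<close> down to \<open>s = 0\<close>, dragging a point
  \<open>p \<in> Z(w(s))\<close> along. By (iv), lowering the level \<open>s\<close> by \<open>\<delta>\<close> raises \<open>G\<close> by at most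
  \<open>\<Lambda> \<delta>\<close> with \<open>\<Lambda> = L |w\<^sub>1 - w\<^sub>2|\<close>. In the interior of the sublevel set this costs nothing;
  on its boundary the gradient \<open>v\<close> has \<open>|v| \<ge> c\<close> by (i), and a step \<open>p - \<tau> v\<close> lowers \<open>G\<close>
  by about \<open>\<tau> |v|\<^sup>2 / 2\<close>, so the point moves only \<open>2 \<Lambda> \<delta> / |v| \<le> 2 \<Lambda> \<delta> / c\<close>.
  These local steps are glued together as in the proof of Ekeland's variational principle:
  the pairs \<open>(p, s)\<close> with \<open>G(p, w(s)) \<le> 1\<close> form a closed set, and a sequence that always
  descends at least halfway to the lowest level of its Brondsted cone converges to a pair at
  level \<open>0\<close>. Thus \<open>C\<^sub>K = 2L/c\<close> works for every \<open>K\<close>.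
\<close>

lemma loc_lipschitz_imp_continuous:
  assumes "loc_lipschitz f"
  shows "continuous_on UNIV f"
proof -
  have "isCont f p" for p
  proof -
    obtain e M where "e > 0" and lip: "\<forall>a\<in>ball p e. \<forall>b\<in>ball p e. dist (f a) (f b) \<le> M * dist a b"
      using assms unfolding loc_lipschitz_def by blast
    have "dist (f a) (f b) \<le> max M 0 * dist a b" if "a \<in> ball p e" "b \<in> ball p e" for a b
      using lip that by (meson max.cobounded1 mult_right_mono zero_le_dist order_trans)
    then have "lipschitz_on (max M 0) (ball p e) f"
      by (simp add: lipschitz_on_def)
    then have "continuous_on (ball p e) f"
      by (rule lipschitz_on_continuous_on)
    then show ?thesis
      using \<open>e > 0\<close> by (simp add: continuous_on_eq_continuous_at)
  qed
  then show ?thesis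
    by (simp add: continuous_at_imp_continuous_on)
qed

lemma convergent_if_dist_le_convergent_diff:
  fixes P :: "nat \<Rightarrow> 'a::complete_space" and S :: "nat \<Rightarrow> real"
  assumes S: "S \<longlonglongrightarrow> \<sigma>"
    and dist_le: "\<And>n m. n \<le> m \<Longrightarrow> dist (P m) (P n) \<le> B * (S n - S m)"
  shows "\<exists>p. P \<longlonglongrightarrow> p \<and> (\<forall>n. dist p (P n) \<le> B * (S n - \<sigma>))"
proof -
  have dist_P: "dist (P m) (P n) \<le> \<bar>B\<bar> * dist (S m) (S n)" for m n
  proof -
    have "dist (P m) (P n) \<le> B * (S (min m n) - S (max m n))"
      using dist_le[of "min m n" "max m n"] by (cases "m \<le> n") (auto simp: dist_commute)
    also have "\<dots> \<le> \<bar>B\<bar> * \<bar>S (min m n) - S (max m n)\<bar>"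
      by (metis abs_ge_self abs_mult)
    also have "\<bar>S (min m n) - S (max m n)\<bar> = dist (S m) (S n)"
      by (cases "m \<le> n") (auto simp: dist_real_def abs_minus_commute)
    finally show ?thesis .
  qed
  have "Cauchy P"
  proof (rule metric_CauchyI)
    fix e :: real assume "e > 0"
    then obtain M where M: "\<forall>m\<ge>M. \<forall>n\<ge>M. dist (S m) (S n) < e / (\<bar>B\<bar> + 1)"
      using LIMSEQ_imp_Cauchy[OF S] unfolding Cauchy_def by (meson divide_pos_pos add_nonneg_pos abs_ge_zero zero_less_one)
    have "dist (P m) (P n) < e" if "m \<ge> M" "n \<ge> M" for m n
    proof -
      have "dist (P m) (P n) \<le> \<bar>B\<bar> * dist (S m) (S n)"
        by (rule dist_P)
      also have "\<dots> \<le> \<bar>B\<bar> * (e / (\<bar>B\<bar> + 1))"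
        using M[rule_format, OF that] by (intro mult_left_mono) auto
      also have "\<dots> < e"
        using \<open>e > 0\<close> by (simp add: field_simps)
      finally show ?thesis .
    qed
    then show "\<exists>M. \<forall>m\<ge>M. \<forall>n\<ge>M. dist (P m) (P n) < e" by blast
  qed
  then obtain p where P: "P \<longlonglongrightarrow> p"
    using Cauchy_convergent_iff convergent_def by blast
  have "dist p (P n) \<le> B * (S n - \<sigma>)" for n
  proof (rule LIMSEQ_le)
    show "(\<lambda>m. dist (P m) (P n)) \<longlonglongrightarrow> dist p (P n)"
      by (intro tendsto_intros P)
    show "(\<lambda>m. B * (S n - S m)) \<longlonglongrightarrow> B * (S n - \<sigma>)"
      by (intro tendsto_intros S)
    show "\<exists>N. \<forall>m\<ge>N. dist (P m) (P n) \<le> B * (S n - S m)"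
      using dist_le by blast
  qed
  with P show ?thesis by blast
qed

text \<open>The cone of the Brondsted order from the proof of Ekeland's principle.\<close>

definition descent_cone :: "real \<Rightarrow> ('a::metric_space \<times> real) set \<Rightarrow> 'a \<times> real \<Rightarrow> ('a \<times> real) set" where
  "descent_cone B E z = {z' \<in> E. snd z' \<le> snd z \<and> dist (fst z') (fst z) \<le> B * (snd z - snd z')}"

lemma descent_cone_refl: "z \<in> E \<Longrightarrow> z \<in> descent_cone B E z"
  by (simp add: descent_cone_def)

lemma descent_cone_trans:
  assumes "z2 \<in> descent_cone B E z1" "z3 \<in> descent_cone B E z2"
  shows "z3 \<in> descent_cone B E z1"
proof -
  have "dist (fst z3) (fst z1) \<le> dist (fst z3) (fst z2) + dist (fst z2) (fst z1)"
    by (rule dist_triangle)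
  also have "\<dots> \<le> B * (snd z2 - snd z3) + B * (snd z1 - snd z2)"
    using assms by (auto simp: descent_cone_def intro: add_mono)
  finally show ?thesis
    using assms by (auto simp: descent_cone_def algebra_simps)
qed

lemma bdd_below_descent_cone_levels:
  assumes "\<And>z. z \<in> E \<Longrightarrow> 0 \<le> snd z"
  shows "bdd_below (snd ` descent_cone B E z)"
  using assms by (intro bdd_belowI[of _ 0]) (auto simp: descent_cone_def)

lemma descent_cone_halving_sequence:
  assumes nonneg: "\<And>z. z \<in> E \<Longrightarrow> 0 \<le> snd z" and "z0 \<in> E"
  obtains Z where "Z 0 = z0" and "\<And>n. Z (Suc n) \<in> descent_cone B E (Z n)"
    and "\<And>n. snd (Z (Suc n)) \<le> (snd (Z n) + Inf (snd ` descent_cone B E (Z n))) / 2"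
proof -
  let ?C = "descent_cone B E" and ?m = "\<lambda>z. Inf (snd ` descent_cone B E z)"
  note bdd = bdd_below_descent_cone_levels[OF nonneg]
  have "\<exists>z'. z' \<in> ?C z \<and> snd z' \<le> (snd z + ?m z) / 2" if "z \<in> E" for z
  proof (cases "?m z < snd z")
    case True
    then have "Inf (snd ` ?C z) < (snd z + ?m z) / 2"
      by simp
    moreover have "snd ` ?C z \<noteq> {}"
      using descent_cone_refl[OF \<open>z \<in> E\<close>] by blast
    ultimately obtain y where "y \<in> snd ` ?C z" "y < (snd z + ?m z) / 2"
      by (subst (asm) cInf_less_iff[OF _ bdd]) auto
    then show ?thesis
      by force
  next
    case False
    have "snd z \<in> snd ` ?C z"
      using descent_cone_refl[OF \<open>z \<in> E\<close>] by (rule imageI)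
    then have "?m z \<le> snd z"
      by (rule cInf_lower[OF _ bdd])
    with False show ?thesis
      using descent_cone_refl[OF \<open>z \<in> E\<close>] by (intro exI[of _ z]) simp
  qed
  then obtain nxt where nxt: "\<And>z. z \<in> E \<Longrightarrow> nxt z \<in> ?C z \<and> snd (nxt z) \<le> (snd z + ?m z) / 2"
    by metis
  define Z where "Z n = (nxt ^^ n) z0" for n
  have Z_Suc: "Z (Suc n) = nxt (Z n)" for n
    by (simp add: Z_def)
  have Z_in_E: "Z n \<in> E" for n
  proof (induction n)
    case 0
    then show ?case
      using \<open>z0 \<in> E\<close> by (simp add: Z_def)
  next
    case (Suc n)
    then show ?case
      using nxt[OF Suc] by (simp add: Z_Suc descent_cone_def)
  qed
  show ?thesis
    using that[of Z] nxt[OF Z_in_E] by (simp add: Z_Suc Z_def)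
qed

lemma descent_sequence_limit:
  fixes E :: "('a::complete_space \<times> real) set"
  assumes "closed E" and nonneg: "\<And>z. z \<in> E \<Longrightarrow> 0 \<le> snd z"
    and "Z 0 \<in> E" and Z_Suc: "\<And>n. Z (Suc n) \<in> descent_cone B E (Z n)"
  obtains p \<sigma> where "(\<lambda>n. snd (Z n)) \<longlonglongrightarrow> \<sigma>" and "(p, \<sigma>) \<in> E"
    and "\<And>n. (p, \<sigma>) \<in> descent_cone B E (Z n)"
proof -
  have Z_in_E: "Z n \<in> E" for n
    using \<open>Z 0 \<in> E\<close> Z_Suc by (cases n) (auto simp: descent_cone_def)
  have Z_in_cone: "Z (n + k) \<in> descent_cone B E (Z n)" for n k
  proof (induction k)
    case 0
    then show ?case
      using descent_cone_refl[OF Z_in_E] by simp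
  next
    case (Suc k)
    then show ?case
      using descent_cone_trans[OF _ Z_Suc[of "n + k"]] by simp
  qed
  define S where "S n = snd (Z n)" for n
  define P where "P n = fst (Z n)" for n
  have "decseq S"
    unfolding decseq_Suc_iff using Z_Suc by (auto simp: S_def descent_cone_def)
  then obtain \<sigma> where S_lim: "S \<longlonglongrightarrow> \<sigma>" and S_ge: "\<And>n. \<sigma> \<le> S n"
    using decseq_convergent[of S] nonneg[OF Z_in_E] unfolding S_def by blast
  have "dist (P m) (P n) \<le> B * (S n - S m)" if "n \<le> m" for n m
    using Z_in_cone[of n "m - n"] that by (simp add: descent_cone_def P_def S_def)
  then obtain p where P_lim: "P \<longlonglongrightarrow> p" and p_dist: "\<And>n. dist p (P n) \<le> B * (S n - \<sigma>)"
    using convergent_if_dist_le_convergent_diff[OF S_lim] by blast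
  have "(p, \<sigma>) \<in> E"
    using \<open>closed E\<close> tendsto_Pair[OF P_lim S_lim] Z_in_E
    by (auto simp: closed_sequential_limits P_def S_def)
  moreover have "(p, \<sigma>) \<in> descent_cone B E (Z n)" for n
    using \<open>(p, \<sigma>) \<in> E\<close> p_dist S_ge by (simp add: descent_cone_def P_def S_def)
  ultimately show ?thesis
    using that S_lim unfolding S_def by blast
qed

lemma closed_descent_reaches_level_zero:
  fixes E :: "('a::complete_space \<times> real) set"
  assumes "closed E"
    and nonneg: "\<And>z. z \<in> E \<Longrightarrow> 0 \<le> snd z"
    and step: "\<And>p s. (p, s) \<in> E \<Longrightarrow> s > 0 \<Longrightarrow> \<exists>q t. (q, t) \<in> E \<and> t < s \<and> dist q p \<le> B * (s - t)"
    and start: "(x0, s0) \<in> E"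
  shows "\<exists>p. (p, 0) \<in> E \<and> dist p x0 \<le> B * s0"
proof -
  let ?C = "descent_cone B E"
  obtain Z where Z0: "Z 0 = (x0, s0)" and Z_Suc: "\<And>n. Z (Suc n) \<in> ?C (Z n)"
    and halving: "\<And>n. snd (Z (Suc n)) \<le> (snd (Z n) + Inf (snd ` ?C (Z n))) / 2"
    using descent_cone_halving_sequence[OF nonneg start] by blast
  have "Z 0 \<in> E"
    using start Z0 by simp
  then obtain p \<sigma> where S_lim: "(\<lambda>n. snd (Z n)) \<longlonglongrightarrow> \<sigma>" and "(p, \<sigma>) \<in> E"
    and p_in_cone: "\<And>n. (p, \<sigma>) \<in> ?C (Z n)"
    using descent_sequence_limit[where Z=Z, OF \<open>closed E\<close> nonneg \<open>Z 0 \<in> E\<close> Z_Suc] by blast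
  have "\<sigma> = 0"
  proof (rule ccontr)
    assume "\<sigma> \<noteq> 0"
    with nonneg[OF \<open>(p, \<sigma>) \<in> E\<close>] have "\<sigma> > 0"
      by simp
    then obtain q t where "(q, t) \<in> E" "t < \<sigma>" "dist q p \<le> B * (\<sigma> - t)"
      using step \<open>(p, \<sigma>) \<in> E\<close> by blast
    then have "(q, t) \<in> ?C (p, \<sigma>)"
      by (simp add: descent_cone_def)
    then have "(q, t) \<in> ?C (Z n)" for n
      by (rule descent_cone_trans[OF p_in_cone])
    then have "t \<in> snd ` ?C (Z n)" for n
      by (rule rev_image_eqI) simp
    then have Inf_le: "Inf (snd ` ?C (Z n)) \<le> t" for n
      by (rule cInf_lower[OF _ bdd_below_descent_cone_levels[OF nonneg]])
    have "snd (Z (Suc n)) \<le> (snd (Z n) + t) / 2" for n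
      using order_trans[OF halving divide_right_mono[OF add_left_mono[OF Inf_le]]] by simp
    moreover have "(\<lambda>n. (snd (Z n) + t) / 2) \<longlonglongrightarrow> (\<sigma> + t) / 2"
      by (rule tendsto_divide[OF tendsto_add[OF S_lim tendsto_const] tendsto_const]) simp
    ultimately have "\<sigma> \<le> (\<sigma> + t) / 2"
      by (intro LIMSEQ_le[OF LIMSEQ_Suc[OF S_lim]]) auto
    with \<open>t < \<sigma>\<close> show False
      by simp
  qed
  then show ?thesis
    using p_in_cone[of 0] by (auto simp: descent_cone_def Z0)
qed

lemma descent_along_negative_gradient:
  fixes f :: "'a::real_inner \<Rightarrow> real"
  assumes grad: "((\<lambda>t. (f (x + t *\<^sub>R (- v)) - f x) / t) \<longlongrightarrow> v \<bullet> (- v)) (at 0)"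
    and "v \<noteq> 0"
  shows "\<exists>t0>0. \<forall>t. 0 \<le> t \<and> t < t0 \<longrightarrow> f (x - t *\<^sub>R v) \<le> f x - t * (norm v)\<^sup>2 / 2"
proof -
  have "- (norm v)\<^sup>2 < - (norm v)\<^sup>2 / 2"
    using \<open>v \<noteq> 0\<close> by simp
  moreover have "v \<bullet> (- v) = - (norm v)\<^sup>2"
    by (simp add: power2_norm_eq_inner)
  ultimately have "\<forall>\<^sub>F t in at 0. (f (x + t *\<^sub>R (- v)) - f x) / t < - (norm v)\<^sup>2 / 2"
    using order_tendstoD(2)[OF grad] by simp
  then obtain t0 where "t0 > 0"
    and quot: "\<And>t. t \<noteq> 0 \<Longrightarrow> dist t 0 < t0 \<Longrightarrow> (f (x + t *\<^sub>R (- v)) - f x) / t < - (norm v)\<^sup>2 / 2"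
    unfolding eventually_at by auto
  have "f (x - t *\<^sub>R v) \<le> f x - t * (norm v)\<^sup>2 / 2" if "0 < t" "t < t0" for t
    using quot[of t] that by (simp add: divide_less_eq algebra_simps)
  then show ?thesis
    using \<open>t0 > 0\<close> by (intro exI[of _ t0]) (auto simp: order_le_less)
qed

lemma sublevel_descent_step_on_boundary:
  fixes g :: "'a::real_normed_vector \<Rightarrow> real \<Rightarrow> real"
  assumes lip: "\<And>q s s'. \<bar>g q s - g q s'\<bar> \<le> \<Lambda> * \<bar>s - s'\<bar>"
    and descent: "\<And>\<tau>. 0 \<le> \<tau> \<Longrightarrow> \<tau> < t0 \<Longrightarrow> g (p - \<tau> *\<^sub>R v) s \<le> 1 - \<tau> * (norm v)\<^sup>2 / 2"
    and "t0 > 0" "c > 0" "c \<le> norm v" "s > 0"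
  shows "\<exists>q t. g q t \<le> 1 \<and> 0 \<le> t \<and> t < s \<and> dist q p \<le> 2 * \<Lambda> / c * (s - t)"
proof -
  have "\<Lambda> \<ge> 0"
    using lip[of p 1 0] by simp
  have "norm v > 0"
    using \<open>c > 0\<close> \<open>c \<le> norm v\<close> by linarith
  \<comment> \<open>Lower the level by \<open>s - t\<close> and compensate by a gradient step of length \<open>\<tau>\<close>;
    the cap \<open>k\<close> keeps \<open>\<tau>\<close> below \<open>t0\<close>.\<close>
  define k where "k = t0 * (norm v)\<^sup>2 / (2 * (\<Lambda> + 1))"
  define t where "t = max (s / 2) (s - k)"
  define \<tau> where "\<tau> = 2 * \<Lambda> * (s - t) / (norm v)\<^sup>2"
  have "k > 0"
    using \<open>t0 > 0\<close> \<open>norm v > 0\<close> \<open>\<Lambda> \<ge> 0\<close> by (simp add: k_def)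
  then have "t < s" "0 \<le> t" "s - t \<le> k"
    using \<open>s > 0\<close> by (auto simp: t_def)
  have "0 \<le> \<tau>"
    using \<open>\<Lambda> \<ge> 0\<close> \<open>t < s\<close> by (simp add: \<tau>_def)
  have "\<tau> \<le> 2 * \<Lambda> * k / (norm v)\<^sup>2"
    unfolding \<tau>_def using \<open>s - t \<le> k\<close> \<open>\<Lambda> \<ge> 0\<close> by (intro divide_right_mono mult_left_mono) auto
  also have "\<dots> = t0 * (\<Lambda> / (\<Lambda> + 1))"
    using \<open>norm v > 0\<close> \<open>\<Lambda> \<ge> 0\<close> by (simp add: k_def field_simps add_nonneg_eq_0_iff)
  also have "\<dots> < t0"
    using \<open>t0 > 0\<close> \<open>\<Lambda> \<ge> 0\<close> by (simp add: mult_less_cancel_left1 divide_less_eq)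
  finally have "\<tau> < t0" .
  define q where "q = p - \<tau> *\<^sub>R v"
  have "g q t \<le> g q s + \<Lambda> * (s - t)"
    using lip[of q t s] \<open>t < s\<close> by (simp add: abs_le_iff)
  also have "\<dots> \<le> 1 - \<tau> * (norm v)\<^sup>2 / 2 + \<Lambda> * (s - t)"
    using descent[OF \<open>0 \<le> \<tau>\<close> \<open>\<tau> < t0\<close>] by (simp add: q_def)
  also have "\<dots> = 1"
    using \<open>norm v > 0\<close> by (simp add: \<tau>_def)
  finally have "g q t \<le> 1" .
  have "dist q p = 2 * \<Lambda> * (s - t) / norm v"
    using \<open>\<Lambda> \<ge> 0\<close> \<open>t < s\<close> \<open>norm v > 0\<close> by (simp add: q_def \<tau>_def dist_norm power2_eq_square)
  also have "\<dots> \<le> 2 * \<Lambda> * (s - t) / c"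
    using \<open>c \<le> norm v\<close> \<open>c > 0\<close> \<open>\<Lambda> \<ge> 0\<close> \<open>t < s\<close> \<open>norm v > 0\<close> by (intro divide_left_mono) auto
  also have "\<dots> = 2 * \<Lambda> / c * (s - t)"
    by simp
  finally show ?thesis
    using \<open>g q t \<le> 1\<close> \<open>0 \<le> t\<close> \<open>t < s\<close> by blast
qed

lemma sublevel_descent_step:
  fixes g :: "'a::real_inner \<Rightarrow> real \<Rightarrow> real" and D :: "'a \<Rightarrow> real \<Rightarrow> 'a"
  assumes grad: "\<And>p s y. ((\<lambda>t. (g (p + t *\<^sub>R y) s - g p s) / t) \<longlongrightarrow> D p s \<bullet> y) (at 0)"
    and grad_bound: "\<And>p s. g p s = 1 \<Longrightarrow> c \<le> norm (D p s)" and "c > 0"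
    and lip: "\<And>p s s'. \<bar>g p s - g p s'\<bar> \<le> \<Lambda> * \<bar>s - s'\<bar>"
    and "g p s \<le> 1" "s > 0"
  shows "\<exists>q t. g q t \<le> 1 \<and> 0 \<le> t \<and> t < s \<and> dist q p \<le> 2 * \<Lambda> / c * (s - t)"
proof (cases "g p s = 1")
  case True
  define v where "v = D p s"
  have "c \<le> norm v"
    using grad_bound[OF True] by (simp add: v_def)
  moreover obtain t0 where "t0 > 0"
    and descent: "\<And>\<tau>. 0 \<le> \<tau> \<Longrightarrow> \<tau> < t0 \<Longrightarrow> g (p - \<tau> *\<^sub>R v) s \<le> 1 - \<tau> * (norm v)\<^sup>2 / 2"
    using descent_along_negative_gradient[where f="\<lambda>x. g x s" and x=p and v=v]
      grad[where p=p and s=s and y="- v"] \<open>c > 0\<close> \<open>c \<le> norm v\<close> True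
    by (fastforce simp: v_def)
  ultimately show ?thesis
    using sublevel_descent_step_on_boundary[where g=g, OF lip descent] \<open>c > 0\<close> \<open>s > 0\<close> by blast
next
  case False
  with \<open>g p s \<le> 1\<close> have "g p s < 1"
    by simp
  have "\<Lambda> \<ge> 0"
    using lip[of p 1 0] by simp
  define t where "t = max (s / 2) (s - (1 - g p s) / (\<Lambda> + 1))"
  have "t < s" "0 \<le> t"
    using \<open>s > 0\<close> \<open>g p s < 1\<close> \<open>\<Lambda> \<ge> 0\<close> by (auto simp: t_def)
  have "(s - t) * (\<Lambda> + 1) \<le> 1 - g p s"
    using \<open>\<Lambda> \<ge> 0\<close> by (simp add: t_def pos_le_divide_eq[symmetric])
  moreover have "g p t \<le> g p s + \<Lambda> * (s - t)"
    using lip[of p t s] \<open>t < s\<close> by (simp add: abs_le_iff)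
  ultimately have "g p t \<le> 1"
    using \<open>t < s\<close> by (simp add: algebra_simps)
  moreover have "0 \<le> 2 * \<Lambda> / c * (s - t)"
    using \<open>\<Lambda> \<ge> 0\<close> \<open>c > 0\<close> \<open>t < s\<close> by simp
  ultimately show ?thesis
    using \<open>t < s\<close> \<open>0 \<le> t\<close> by (intro exI[of _ p] exI[of _ t]) simp
qed

lemma sublevel_point_transport:
  fixes G :: "'a::{real_inner,complete_space} \<Rightarrow> 'w::real_normed_vector \<Rightarrow> real"
    and DG :: "'a \<Rightarrow> 'w \<Rightarrow> 'a"
  assumes cont: "continuous_on UNIV (\<lambda>(x, w). G x w)"
    and grad: "\<And>x w y. ((\<lambda>t. (G (x + t *\<^sub>R y) w - G x w) / t) \<longlongrightarrow> DG x w \<bullet> y) (at 0)"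
    and grad_bound: "\<And>x w. G x w = 1 \<Longrightarrow> c \<le> norm (DG x w)" and "c > 0"
    and lip: "\<And>x w w'. \<bar>G x w - G x w'\<bar> \<le> L * norm (w - w')"
    and "x \<in> Zset G w1"
  shows "\<exists>y\<in>Zset G w2. dist x y \<le> 2 * L / c * norm (w1 - w2)"
proof -
  define w where "w s = w2 + s *\<^sub>R (w1 - w2)" for s
  define g where "g p s = G p (w s)" for p s
  define E where "E = {(p, s). 0 \<le> s \<and> g p s \<le> 1}"
  have g_lip: "\<bar>g p s - g p s'\<bar> \<le> L * norm (w1 - w2) * \<bar>s - s'\<bar>" for p s s'
  proof -
    have "norm (w s - w s') = \<bar>s - s'\<bar> * norm (w1 - w2)"
      by (simp add: w_def scaleR_diff_left[symmetric])
    then show ?thesis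
      using lip[of p "w s" "w s'"] by (simp add: g_def mult_ac)
  qed
  have g_cont: "continuous_on UNIV (\<lambda>z. g (fst z) (snd z))"
    unfolding g_def w_def
    by (rule continuous_on_compose2[OF cont, of _ "\<lambda>z. (fst z, w2 + snd z *\<^sub>R (w1 - w2))", simplified])
      (auto intro!: continuous_intros)
  have "E = {z. 0 \<le> snd z} \<inter> {z. g (fst z) (snd z) \<le> 1}"
    by (auto simp: E_def)
  then have E_closed: "closed E"
    using g_cont by (auto intro!: closed_Int closed_Collect_le continuous_intros)
  have E_nonneg: "0 \<le> snd z" if "z \<in> E" for z
    using that by (auto simp: E_def)
  have E_step: "\<exists>q t. (q, t) \<in> E \<and> t < s \<and> dist q p \<le> 2 * (L * norm (w1 - w2)) / c * (s - t)"
    if "(p, s) \<in> E" "s > 0" for p s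
    using sublevel_descent_step[of g "\<lambda>p s. DG p (w s)" c, OF _ _ \<open>c > 0\<close> g_lip] grad grad_bound that
    by (fastforce simp: E_def g_def)
  have E_start: "(x, 1) \<in> E"
    using \<open>x \<in> Zset G w1\<close> by (simp add: E_def g_def w_def Zset_def)
  have "\<exists>y. (y, 0) \<in> E \<and> dist y x \<le> 2 * (L * norm (w1 - w2)) / c * 1"
    by (rule closed_descent_reaches_level_zero[OF E_closed]) (fact E_nonneg E_step E_start)+
  then show ?thesis
    by (auto simp: E_def g_def w_def Zset_def dist_commute)
qed

lemma hdist_le:
  assumes "\<And>x. x \<in> A \<Longrightarrow> \<exists>y\<in>B. dist x y \<le> r"
    and "\<And>y. y \<in> B \<Longrightarrow> \<exists>x\<in>A. dist y x \<le> r"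
  shows "hdist A B \<le> ereal r"
  unfolding hdist_def edist_set_def using assms
  by (intro max.boundedI SUP_least) (meson INF_lower2 ereal_less_eq(3))+

theorem lemma2p2:
  fixes G :: "'a::{real_inner,complete_space} \<Rightarrow> 'w::banach \<Rightarrow> real"
    and DG :: "'a \<Rightarrow> 'w \<Rightarrow> 'a"
    and lam c L :: real
    and \<mu>1 :: "'w \<Rightarrow> real \<Rightarrow> real" and \<mu>2 :: "real \<Rightarrow> real"
  assumes G_nonneg: "\<And>x w. G x w \<ge> 0"
    and G_loclip: "loc_lipschitz (\<lambda>(x, w). G x w)"
    and DG_grad: "\<And>x w y. ((\<lambda>t. (G (x + t *\<^sub>R y) w - G x w) / t) \<longlongrightarrow> DG x w \<bullet> y) (at 0)"
    and pos: "lam > 0" "c > 0" "L > 0"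
    and mu1_nonneg: "\<And>w s. s \<ge> 0 \<Longrightarrow> \<mu>1 w s \<ge> 0"
    and mu2_nonneg: "\<And>s. s \<ge> 0 \<Longrightarrow> \<mu>2 s \<ge> 0"
    and mu1_0: "\<And>w. \<mu>1 w 0 = 0" and mu2_0: "\<mu>2 0 = 0"
    and mu1_inf: "\<And>w. filterlim (\<mu>1 w) at_top at_top"
    and mu2_inf: "filterlim \<mu>2 at_top at_top"
    and H1: "\<And>x w. G x w = 1 \<Longrightarrow> norm (DG x w) \<ge> c"
    and H2: "\<And>x y w. x \<in> Zset G w \<Longrightarrow> y \<in> Zset G w \<Longrightarrow>
               norm (DG x w - DG y w) \<le> \<mu>1 w (norm (x - y))"
    and H3: "\<And>x z w. x \<in> frontier (Zset G w) \<Longrightarrow> z \<in> Zset G w \<Longrightarrow>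
               (DG x w - DG z w) \<bullet> (x - z) \<ge> - lam * (norm (x - z))\<^sup>2"
    and H4: "\<And>x w w'. \<bar>G x w - G x w'\<bar> \<le> L * norm (w - w')"
    and H5: "\<And>x w \<rho>. \<rho> > 0 \<Longrightarrow> edist_set x (Zset G w) \<ge> ereal \<rho> \<Longrightarrow> G x w - 1 \<ge> \<mu>2 \<rho>"
  shows "\<forall>K>0. \<exists>C>0. \<forall>w1 w2. max (norm w1) (norm w2) \<le> K \<longrightarrow>
           hdist (Zset G w1) (Zset G w2) \<le> ereal (C * norm (w1 - w2))"
proof (intro allI impI exI[of _ "2 * L / c"] conjI)
  fix K :: real and w1 w2 :: 'w
  have transport: "\<exists>y\<in>Zset G w'. dist x y \<le> 2 * L / c * norm (w - w')" if "x \<in> Zset G w" for x w w'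
    using sublevel_point_transport[OF loc_lipschitz_imp_continuous[OF G_loclip] DG_grad H1 \<open>c > 0\<close> H4 that] .
  show "hdist (Zset G w1) (Zset G w2) \<le> ereal (2 * L / c * norm (w1 - w2))"
  proof (rule hdist_le[OF transport])
    fix y assume "y \<in> Zset G w2"
    from transport[OF this] show "\<exists>x\<in>Zset G w1. dist y x \<le> 2 * L / c * norm (w1 - w2)"
      by (simp add: norm_minus_commute)
  qed
  show "2 * L / c > 0"
    using pos by simp
qed

end
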